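(* Let $\mu$ be a finite signed Borel measure on $\mathbb{R}^n$, let $A_+,A_-$ be the sets of its Hahn decomposition, and let $\mu_+$ be its positive part. Let $$P_+=\{x\in A_+ : \exists\,\delta(x)>0 \text{ such that } \mu_+(B_r(x))\le 10\,\mu(B_r(x)) \text{ for all } r<\delta(x)\}.$$ Then $\mu(P_+)=\mu(A_+)$.
   Context: $B_r(x)$ is the ball in $\mathbb{R}^n$ of radius $r$ centered at $x$. The Hahn decomposition means $\mathbb{R}^n=A_+\sqcup A_-$ with $\mu\ge0$ on subsets of $A_+$ and $\mu\le0$ on subsets of $A_-$; $\mu_+(E)=\mu(E\cap A_+)$. *)

theory Defs
  imports "HOL-Analysis.Analysis"
begin

text \<open>Values on non-measurable sets are irrelevant.\<close>
definition signed_measure :: "'a measure \<Rightarrow> ('a set \<Rightarrow> real) \<Rightarrow> bool" where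
  "signed_measure M \<mu> \<longleftrightarrow> \<mu> {} = 0 \<and>
     (\<forall>A::nat \<Rightarrow> 'a set. range A \<subseteq> sets M \<longrightarrow> disjoint_family A \<longrightarrow>
        (\<lambda>i. \<mu> (A i)) sums \<mu> (\<Union>i. A i))"

definition hahn_decomposition :: "'a measure \<Rightarrow> ('a set \<Rightarrow> real) \<Rightarrow> 'a set \<Rightarrow> bool" where
  "hahn_decomposition M \<mu> Ap \<longleftrightarrow> Ap \<in> sets M \<and>
     (\<forall>E\<in>sets M. E \<subseteq> Ap \<longrightarrow> \<mu> E \<ge> 0) \<and>
     (\<forall>E\<in>sets M. E \<subseteq> space M - Ap \<longrightarrow> \<mu> E \<le> 0)"

definition pos_part :: "('a set \<Rightarrow> real) \<Rightarrow> 'a set \<Rightarrow> 'a set \<Rightarrow> real" where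
  "pos_part \<mu> Ap E = \<mu> (E \<inter> Ap)"

end

theory Submission
  imports Defs
begin

text \<open>
  Split \<open>\<mu> = N - L\<close> into its Jordan parts, finite Borel measures with \<open>L(A\<^sub>+) = 0\<close>. On a ball
  the inequality defining \<open>P\<^sub>+\<close> reads \<open>10 L \<le> 9 N\<close>, so every point of \<open>E = A\<^sub>+ - P\<^sub>+\<close> is the
  centre of arbitrarily small balls with \<open>9 N < 10 L\<close>. Given a compact \<open>K \<subseteq> E\<close> and an open
  \<open>U \<supseteq> K\<close>, such balls with locally constant radii yield a finite Besicovitch-type cover of \<open>K\<close>
  inside \<open>U\<close> whose overlap is bounded by a constant \<open>M\<close> depending only on the dimension: seen from
  a common point, the centres lie in \<open>1\<close>-separated directions. Hence \<open>9 N(K) \<le> 10 M L(U)\<close>, and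
  since \<open>L(K) = 0\<close>, outer regularity of \<open>L\<close> makes the right-hand side arbitrarily small. So \<open>N\<close>
  vanishes on the compact subsets of \<open>E\<close>, hence on \<open>E\<close> by inner regularity, and
  \<open>\<mu>(P\<^sub>+) = N(A\<^sub>+) = \<mu>(A\<^sub>+)\<close>. That \<open>P\<^sub>+\<close> is a Borel set follows from the left-continuity of
  \<open>r \<mapsto> N(B\<^sub>r(x))\<close>, which lets rational radii decide membership.
\<close>

definition separated :: "real \<Rightarrow> 'a::metric_space set \<Rightarrow> bool" where
  "separated e X \<longleftrightarrow> (\<forall>x\<in>X. \<forall>y\<in>X. x \<noteq> y \<longrightarrow> e \<le> dist x y)"

definition center_separated :: "'a::metric_space set \<Rightarrow> ('a \<Rightarrow> real) \<Rightarrow> bool" where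
  "center_separated C \<rho> \<longleftrightarrow> (\<forall>c\<in>C. \<forall>c'\<in>C. c \<noteq> c' \<and> \<rho> c' \<le> \<rho> c \<longrightarrow> \<rho> c \<le> dist c c')"

lemma bounded_separated_card_bound:
  fixes B :: "'a::heine_borel set"
  assumes "bounded B" "e > 0"
  obtains n where "\<And>X. X \<subseteq> B \<Longrightarrow> separated e X \<Longrightarrow> finite X \<and> card X \<le> n"
proof -
  obtain a R where R: "B \<subseteq> cball a R"
    using assms(1) unfolding bounded_subset_cball by blast
  have "seq_compact (cball a R)"
    by (simp add: compact_imp_seq_compact)
  then obtain F where F: "finite F" "cball a R \<subseteq> (\<Union>x\<in>F. ball x (e/2))"
    using seq_compact_imp_totally_bounded[of "cball a R"] assms(2) by (meson half_gt_zero)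
  have "finite X \<and> card X \<le> card F" if X: "X \<subseteq> B" and sep: "separated e X" for X
  proof -
    define g where "g x = (SOME f. f \<in> F \<and> x \<in> ball f (e/2))" for x
    have g: "g x \<in> F \<and> x \<in> ball (g x) (e/2)" if "x \<in> X" for x
      unfolding g_def by (rule someI_ex) (use that X R F(2) in blast)
    have "inj_on g X"
    proof (rule inj_onI, rule ccontr)
      fix x y assume xy: "x \<in> X" "y \<in> X" "g x = g y" "x \<noteq> y"
      have "dist x y \<le> dist x (g x) + dist y (g y)"
        using dist_triangle2[of x y "g x"] xy(3) by simp
      also have "\<dots> < e"
        using g[OF xy(1)] g[OF xy(2)] by (simp add: dist_commute)
      finally show False
        using sep xy unfolding separated_def by force
    qed
    moreover have "g ` X \<subseteq> F"
      using g by blast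
    ultimately show ?thesis
      using inj_on_finite card_inj_on_le F(1) by blast
  qed
  then show ?thesis
    using that by blast
qed

lemma maximal_separated_subset:
  fixes T :: "'a::heine_borel set"
  assumes "bounded T" "s > 0"
  obtains C where "C \<subseteq> T" "finite C" "separated s C" "T \<subseteq> (\<Union>c\<in>C. ball c s)"
proof -
  obtain n where n: "\<And>X. X \<subseteq> T \<Longrightarrow> separated s X \<Longrightarrow> finite X \<and> card X \<le> n"
    using bounded_separated_card_bound[OF assms] by blast
  have "\<exists>k. (\<exists>X\<subseteq>T. separated s X \<and> card X = k) \<and>
      (\<forall>k'. (\<exists>X\<subseteq>T. separated s X \<and> card X = k') \<longrightarrow> k' \<le> k)"
  proof (rule ex_has_greatest_nat[where k = 0 and b = "Suc n"])
    show "\<exists>X\<subseteq>T. separated s X \<and> card X = 0"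
      by (rule exI[of _ "{}"]) (simp add: separated_def)
    show "\<forall>k. (\<exists>X\<subseteq>T. separated s X \<and> card X = k) \<longrightarrow> k < Suc n"
      using n by (auto simp: less_Suc_eq_le)
  qed
  then obtain C where C: "C \<subseteq> T" "separated s C"
    and max: "\<And>X. X \<subseteq> T \<Longrightarrow> separated s X \<Longrightarrow> card X \<le> card C"
    by blast
  have "T \<subseteq> (\<Union>c\<in>C. ball c s)"
  proof
    fix y assume y: "y \<in> T"
    show "y \<in> (\<Union>c\<in>C. ball c s)"
    proof (rule ccontr)
      assume far: "y \<notin> (\<Union>c\<in>C. ball c s)"
      then have "y \<notin> C"
        using assms(2) centre_in_ball by blast
      moreover have "separated s (insert y C)"
        using C(2) far unfolding separated_def by (auto simp: dist_commute not_less)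
      ultimately show False
        using max[of "insert y C"] n[OF C] y C(1) by simp
    qed
  qed
  then show ?thesis
    using that C n[OF C] by blast
qed


lemma finite_radii_center_separated_cover:
  fixes K :: "'a::heine_borel set"
  assumes "finite S" "\<forall>s\<in>S. 0 < s" "bounded K" "\<rho> ` K \<subseteq> S"
  obtains C where "C \<subseteq> K" "finite C" "center_separated C \<rho>" "K \<subseteq> (\<Union>c\<in>C. ball c (\<rho> c))"
proof -
  \<comment> \<open>greedily by decreasing radius: a maximal separated set among the points of largest radius \<open>b\<close>,
    then recursion on the points its balls miss\<close>
  have "\<exists>C\<subseteq>K. finite C \<and> center_separated C \<rho> \<and> K \<subseteq> (\<Union>c\<in>C. ball c (\<rho> c))"
    using assms
  proof (induction S arbitrary: K rule: finite_linorder_max_induct)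
    case empty
    then show ?case
      by (auto simp: center_separated_def)
  next
    case (insert b S)
    define T where "T = {y\<in>K. \<rho> y = b}"
    obtain C1 where C1: "C1 \<subseteq> T" "finite C1" "separated b C1" "T \<subseteq> (\<Union>c\<in>C1. ball c b)"
      by (rule maximal_separated_subset[of T b])
         (use insert.prems in \<open>auto simp: T_def intro: bounded_subset\<close>)
    define K' where "K' = K - (\<Union>c\<in>C1. ball c b)"
    have "\<rho> ` K' \<subseteq> S"
      using insert.prems(3) C1(4) unfolding K'_def T_def by auto
    then obtain C2 where C2: "C2 \<subseteq> K'" "finite C2" "center_separated C2 \<rho>"
      "K' \<subseteq> (\<Union>c\<in>C2. ball c (\<rho> c))"
      using insert.IH[of K'] insert.prems(1,2) by (auto simp: K'_def intro: bounded_subset)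
    have \<rho>C1: "\<rho> c = b" if "c \<in> C1" for c
      using that C1(1) by (simp add: T_def subset_iff)
    have \<rho>C2: "\<rho> c < b" if "c \<in> C2" for c
      using that C2(1) \<open>\<rho> ` K' \<subseteq> S\<close> insert.hyps(2) by blast
    have "center_separated (C1 \<union> C2) \<rho>"
      unfolding center_separated_def
    proof (intro ballI impI)
      fix c c' assume c: "c \<in> C1 \<union> C2" "c' \<in> C1 \<union> C2" and le: "c \<noteq> c' \<and> \<rho> c' \<le> \<rho> c"
      show "\<rho> c \<le> dist c c'"
      proof (cases "c \<in> C1")
        case True
        moreover have "c' \<in> C2 \<Longrightarrow> c' \<notin> ball c b"
          using True C2(1) by (auto simp: K'_def)
        ultimately show ?thesis
          using c le C1(3) \<rho>C1 by (auto simp: separated_def)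
      next
        case False
        then have "c \<in> C2" "c' \<in> C2"
          using c le \<rho>C1 \<rho>C2 by force+
        then show ?thesis
          using C2(3) le unfolding center_separated_def by blast
      qed
    qed
    moreover have "K \<subseteq> (\<Union>c\<in>C1 \<union> C2. ball c (\<rho> c))"
      using C2(4) \<rho>C1 unfolding K'_def by auto
    ultimately show ?case
      using C1 C2 by (intro exI[of _ "C1 \<union> C2"]) (auto simp: T_def K'_def)
  qed
  then show ?thesis
    using that by blast
qed

lemma dist_sgn_gt_one:
  fixes p q :: "'a::real_inner"
  assumes "p \<noteq> 0" "q \<noteq> 0" "norm p < norm (p - q)" "norm q < norm (p - q)"
  shows "1 < dist (sgn p) (sgn q)"
proof -
  define a b where "a = norm p" and "b = norm q"
  have ab: "0 < a" "0 < b"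
    using assms(1,2) by (simp_all add: a_def b_def)
  have diff: "norm (p - q)^2 = a^2 + b^2 - 2 * (p \<bullet> q)"
    by (simp add: a_def b_def power2_norm_eq_inner inner_diff_left inner_diff_right inner_commute)
  have "a^2 < norm (p - q)^2" "b^2 < norm (p - q)^2"
    using assms(3,4) ab by (simp_all add: a_def b_def power_strict_mono)
  then have "2 * (p \<bullet> q) < min (a^2) (b^2)"
    using diff by simp
  also have "min (a^2) (b^2) \<le> a * b"
    using ab by (smt (verit, best) mult_mono' power2_eq_square)
  finally have "2 * ((p \<bullet> q) / (a * b)) < 1"
    using ab by (simp add: field_simps)
  moreover have "dist (sgn p) (sgn q)^2 = sgn p \<bullet> sgn p + sgn q \<bullet> sgn q - 2 * (sgn p \<bullet> sgn q)"
    by (simp add: dist_norm dot_square_norm[symmetric] inner_diff_left inner_diff_right inner_commute)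
  moreover have "sgn p \<bullet> sgn p = 1" "sgn q \<bullet> sgn q = 1"
    using assms(1,2) by (simp_all add: dot_square_norm norm_sgn)
  moreover have "sgn p \<bullet> sgn q = (p \<bullet> q) / (a * b)"
    by (simp add: sgn_div_norm a_def b_def field_simps)
  ultimately have "1 < dist (sgn p) (sgn q)^2"
    by linarith
  then show ?thesis
    by (metis less_1_mult not_le power2_eq_square power_le_one zero_le_dist)
qed

lemma center_separated_overlap_bound:
  "\<exists>M::nat. \<forall>(C::'a::euclidean_space set) \<rho> y. center_separated C \<rho> \<longrightarrow> card {c\<in>C. y \<in> ball c (\<rho> c)} \<le> M"
proof -
  obtain m where m: "\<And>X. X \<subseteq> sphere (0::'a) 1 \<Longrightarrow> separated 1 X \<Longrightarrow> finite X \<and> card X \<le> m"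
    using bounded_separated_card_bound[of "sphere (0::'a) 1" 1] by auto
  have "card {c\<in>C. y \<in> ball c (\<rho> c)} \<le> max 1 m" if sep: "center_separated C \<rho>"
    for C :: "'a set" and \<rho> y
  proof -
    define I where "I = {c\<in>C. y \<in> ball c (\<rho> c)}"
    show ?thesis
    proof (cases "card I \<le> 1")
      case False
      have far: "dist c y < dist c c'" if "c \<in> I" "c' \<in> I" "c \<noteq> c'" for c c'
        using that sep unfolding I_def center_separated_def
        by (cases "\<rho> c' \<le> \<rho> c") (force simp: dist_commute)+
      have ne: "c \<noteq> y" if "c \<in> I" for c
      proof
        assume "c = y"
        have "I \<noteq> {c}"
          using False by force
        then obtain c' where "c' \<in> I" "c' \<noteq> c"
          using \<open>c \<in> I\<close> by blast
        then show False
          using far[of c' c] \<open>c \<in> I\<close> \<open>c = y\<close> by (simp add: dist_commute)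
      qed
      \<comment> \<open>seen from \<open>y\<close>, distinct centres lie in \<open>1\<close>-separated directions\<close>
      define u where "u c = sgn (c - y)" for c
      have u_far: "1 < dist (u c) (u c')" if "c \<in> I" "c' \<in> I" "c \<noteq> c'" for c c'
        unfolding u_def using that far[OF that] far[of c' c] ne
        by (intro dist_sgn_gt_one) (auto simp: dist_norm dist_commute norm_minus_commute)
      have "inj_on u I"
        by (rule inj_onI) (use u_far in fastforce)
      moreover have "u ` I \<subseteq> sphere 0 1"
        using ne by (auto simp: u_def norm_sgn)
      moreover have "separated 1 (u ` I)"
        unfolding separated_def using u_far by (fastforce intro: less_imp_le)
      ultimately have "card I \<le> m"
        using m by (metis card_image)
      then show ?thesis
        by (simp add: I_def)
    qed (simp add: I_def)
  qed
  then show ?thesis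
    by blast
qed

lemma signed_measure_restrict:
  assumes "signed_measure M \<mu>" "A \<in> sets M"
  shows "signed_measure M (\<lambda>E. \<mu> (E \<inter> A))"
  unfolding signed_measure_def
proof (intro conjI allI impI)
  show "\<mu> ({} \<inter> A) = 0"
    using assms(1) by (simp add: signed_measure_def)
  fix F :: "nat \<Rightarrow> 'a set" assume F: "range F \<subseteq> sets M" "disjoint_family F"
  have "range (\<lambda>i. F i \<inter> A) \<subseteq> sets M" "disjoint_family (\<lambda>i. F i \<inter> A)"
    using F assms(2) by (auto simp: disjoint_family_on_def)
  then have "(\<lambda>i. \<mu> (F i \<inter> A)) sums \<mu> (\<Union>i. F i \<inter> A)"
    using assms(1) unfolding signed_measure_def by blast
  moreover have "(\<Union>i. F i \<inter> A) = (\<Union>i. F i) \<inter> A"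
    by blast
  ultimately show "(\<lambda>i. \<mu> (F i \<inter> A)) sums \<mu> ((\<Union>i. F i) \<inter> A)"
    by simp
qed

lemma signed_measure_uminus: "signed_measure M \<mu> \<Longrightarrow> signed_measure M (\<lambda>E. - \<mu> E)"
  unfolding signed_measure_def by (auto intro: sums_minus)

lemma signed_measure_Un:
  assumes "signed_measure M \<mu>" "A \<in> sets M" "B \<in> sets M" "A \<inter> B = {}"
  shows "\<mu> (A \<union> B) = \<mu> A + \<mu> B"
proof -
  have "range (binaryset A B) \<subseteq> sets M" "disjoint_family (binaryset A B)"
    using assms(2-4) by (auto simp: range_binaryset_eq disjoint_family_on_def binaryset_def)
  then have "(\<lambda>i. \<mu> (binaryset A B i)) sums \<mu> (A \<union> B)"
    using assms(1) unfolding signed_measure_def by (metis UN_binaryset_eq)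
  moreover have "(\<lambda>i. \<mu> (binaryset A B i)) sums (\<mu> A + \<mu> B)"
    using assms(1) by (intro binaryset_sums) (simp add: signed_measure_def)
  ultimately show ?thesis
    by (rule sums_unique2)
qed

lemma signed_measure_nonneg_finite_measure:
  assumes "signed_measure M \<mu>" "\<And>E. E \<in> sets M \<Longrightarrow> 0 \<le> \<mu> E"
  obtains N where "finite_measure N" "sets N = sets M" "\<And>E. E \<in> sets M \<Longrightarrow> measure N E = \<mu> E"
proof
  let ?N = "measure_of (space M) (sets M) (\<lambda>E. ennreal (\<mu> E))"
  have "countably_additive (sets M) (\<lambda>E. ennreal (\<mu> E))"
    unfolding countably_additive_def
  proof (intro allI impI)
    fix A :: "nat \<Rightarrow> 'a set" assume A: "range A \<subseteq> sets M" "disjoint_family A"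
    then have "(\<lambda>i. \<mu> (A i)) sums \<mu> (\<Union>i. A i)"
      using assms(1) unfolding signed_measure_def by blast
    then have "(\<lambda>i. ennreal (\<mu> (A i))) sums ennreal (\<mu> (\<Union>i. A i))"
      using A(1) assms(2) by (simp add: sums_ennreal subset_eq)
    then show "(\<Sum>i. ennreal (\<mu> (A i))) = ennreal (\<mu> (\<Union>i. A i))"
      by (rule sums_unique[symmetric])
  qed
  moreover have "positive (sets M) (\<lambda>E. ennreal (\<mu> E))"
    using assms(1) by (simp add: positive_def signed_measure_def)
  ultimately have emeasure_N: "emeasure ?N E = \<mu> E" if "E \<in> sets M" for E
    by (intro emeasure_measure_of_sigma sets.sigma_algebra_axioms that)
  then show "measure ?N E = \<mu> E" if "E \<in> sets M" for E
    using that assms(2) by (simp add: measure_def)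
  show "sets ?N = sets M"
    by simp
  show "finite_measure ?N"
    using emeasure_N[of "space M"] by (intro finite_measureI) simp
qed

lemma hahn_decomposition_jordan:
  assumes "signed_measure M \<mu>" "hahn_decomposition M \<mu> Ap"
  obtains N L where "finite_measure N" "sets N = sets M" "finite_measure L" "sets L = sets M"
    "\<And>E. E \<in> sets M \<Longrightarrow> measure N E = \<mu> (E \<inter> Ap)"
    "\<And>E. E \<in> sets M \<Longrightarrow> \<mu> E = measure N E - measure L E"
proof -
  have Ap: "Ap \<in> sets M" "space M - Ap \<in> sets M"
    using assms(2) by (auto simp: hahn_decomposition_def)
  have sign: "0 \<le> \<mu> (E \<inter> Ap)" "\<mu> (E \<inter> (space M - Ap)) \<le> 0" if "E \<in> sets M" for E
    using assms(2) that Ap unfolding hahn_decomposition_def by (meson Int_lower2 sets.Int)+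
  obtain N where N: "finite_measure N" "sets N = sets M"
    "\<And>E. E \<in> sets M \<Longrightarrow> measure N E = \<mu> (E \<inter> Ap)"
    using signed_measure_nonneg_finite_measure[OF signed_measure_restrict[OF assms(1) Ap(1)]] sign
    by blast
  obtain L where L: "finite_measure L" "sets L = sets M"
    "\<And>E. E \<in> sets M \<Longrightarrow> measure L E = - \<mu> (E \<inter> (space M - Ap))"
    using signed_measure_nonneg_finite_measure[OF
        signed_measure_uminus[OF signed_measure_restrict[OF assms(1) Ap(2)]]] sign
    by (metis neg_0_le_iff_le)
  have "\<mu> E = measure N E - measure L E" if E: "E \<in> sets M" for E
  proof -
    have "E = (E \<inter> Ap) \<union> (E \<inter> (space M - Ap))"
      using sets.sets_into_space[OF E] by blast
    moreover have "\<mu> ((E \<inter> Ap) \<union> (E \<inter> (space M - Ap))) = \<mu> (E \<inter> Ap) + \<mu> (E \<inter> (space M - Ap))"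
      using E Ap by (intro signed_measure_Un[OF assms(1)]) auto
    ultimately show ?thesis
      using N(3)[OF E] L(3)[OF E] by simp
  qed
  then show thesis
    using that N L by blast
qed

lemma measurable_measure_ball:
  fixes M :: "'a::{metric_space, second_countable_topology} measure"
  assumes "finite_measure M" "sets M = sets borel"
  shows "(\<lambda>x. measure M (ball x r)) \<in> borel_measurable borel"
proof -
  interpret finite_measure M by fact
  define Q where "Q = {p::'a \<times> 'a. dist (fst p) (snd p) < r}"
  have "open Q"
    unfolding Q_def by (intro open_Collect_less continuous_intros)
  then have "Q \<in> sets (borel \<Otimes>\<^sub>M (borel :: 'a measure))"
    unfolding borel_prod by simp
  also have "sets (borel \<Otimes>\<^sub>M (borel :: 'a measure)) = sets (borel \<Otimes>\<^sub>M M)"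
    by (rule sets_pair_measure_cong) (simp_all add: assms(2))
  finally have "Q \<in> sets (borel \<Otimes>\<^sub>M M)" .
  then have "(\<lambda>x. emeasure M (Pair x -` Q)) \<in> borel_measurable borel"
    by (rule measurable_emeasure_Pair)
  moreover have "Pair x -` Q = ball x r" for x
    by (auto simp: Q_def ball_def)
  ultimately have "(\<lambda>x. emeasure M (ball x r)) \<in> borel_measurable borel"
    by simp
  then show ?thesis
    unfolding measure_def by measurable
qed

lemma tendsto_measure_ball_at_left:
  fixes M :: "'a::metric_space measure"
  assumes "finite_measure M" "sets M = sets borel"
  shows "((\<lambda>s. measure M (ball x s)) \<longlongrightarrow> measure M (ball x r)) (at_left r)"
proof (rule tendsto_at_left_sequentially[of "r - 1"])
  fix S :: "nat \<Rightarrow> real"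
  assume S: "\<And>n. S n < r" "incseq S" "S \<longlonglongrightarrow> r"
  have "range (\<lambda>n. ball x (S n)) \<subseteq> sets M"
    using assms(2) by (simp add: image_subset_iff)
  moreover have "incseq (\<lambda>n. ball x (S n))"
    using S(2) by (simp add: incseq_def subset_ball)
  ultimately have "(\<lambda>n. measure M (ball x (S n))) \<longlonglongrightarrow> measure M (\<Union>n. ball x (S n))"
    by (rule finite_measure.finite_Lim_measure_incseq[OF assms(1)])
  moreover have "(\<Union>n. ball x (S n)) = ball x r"
  proof
    show "(\<Union>n. ball x (S n)) \<subseteq> ball x r"
      by (intro UN_least subset_ball less_imp_le S(1))
    show "ball x r \<subseteq> (\<Union>n. ball x (S n))"
    proof
      fix z assume "z \<in> ball x r"
      then have "\<forall>\<^sub>F n in sequentially. dist x z < S n"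
        using S(3) by (simp add: order_tendstoD(1))
      then obtain n where "dist x z < S n"
        unfolding eventually_sequentially by blast
      then show "z \<in> (\<Union>n. ball x (S n))"
        by auto
    qed
  qed
  ultimately show "(\<lambda>n. measure M (ball x (S n))) \<longlonglongrightarrow> measure M (ball x r)"
    by simp
qed simp

lemma nonneg_near_zero_iff_rat:
  fixes f :: "real \<Rightarrow> real"
  assumes "\<And>r. 0 < r \<Longrightarrow> (f \<longlongrightarrow> f r) (at_left r)"
  shows "(\<exists>\<delta>>0. \<forall>r. 0 < r \<and> r < \<delta> \<longrightarrow> 0 \<le> f r) \<longleftrightarrow>
    (\<exists>n::nat. \<forall>q::rat. 0 < real_of_rat q \<and> real_of_rat q < 1 / Suc n \<longrightarrow> 0 \<le> f (real_of_rat q))"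
proof
  assume "\<exists>\<delta>>0. \<forall>r. 0 < r \<and> r < \<delta> \<longrightarrow> 0 \<le> f r"
  then obtain \<delta> where "0 < \<delta>" "\<And>r. 0 < r \<Longrightarrow> r < \<delta> \<Longrightarrow> 0 \<le> f r"
    by blast
  moreover obtain n where "inverse (Suc n) < \<delta>"
    using reals_Archimedean[OF \<open>0 < \<delta>\<close>] by blast
  ultimately show "\<exists>n::nat. \<forall>q::rat. 0 < real_of_rat q \<and> real_of_rat q < 1 / Suc n \<longrightarrow> 0 \<le> f (real_of_rat q)"
    unfolding inverse_eq_divide by (meson order.strict_trans)
next
  assume "\<exists>n::nat. \<forall>q::rat. 0 < real_of_rat q \<and> real_of_rat q < 1 / Suc n \<longrightarrow> 0 \<le> f (real_of_rat q)"
  then obtain n :: nat where n: "\<And>q. 0 < real_of_rat q \<Longrightarrow> real_of_rat q < 1 / Suc n \<Longrightarrow> 0 \<le> f (real_of_rat q)"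
    by blast
  have "0 \<le> f r" if r: "0 < r" "r < 1 / Suc n" for r
  proof (rule ccontr)
    assume "\<not> 0 \<le> f r"
    then have "\<forall>\<^sub>F s in at_left r. f s < 0 \<and> s \<in> {0<..<r}"
      by (intro eventually_conj order_tendstoD(2)[OF assms[OF r(1)]] eventually_at_left_real r(1)) simp
    then obtain b where "b < r" and b: "\<And>s. b < s \<Longrightarrow> s < r \<Longrightarrow> f s < 0 \<and> 0 < s"
      unfolding eventually_at_left[OF r(1)] by auto
    obtain q where q: "max b 0 < real_of_rat q" "real_of_rat q < r"
      using of_rat_dense[of "max b 0" r] \<open>b < r\<close> r(1) by auto
    then have "f (real_of_rat q) < 0"
      using b by simp
    moreover have "0 \<le> f (real_of_rat q)"
      using q r(2) by (intro n) auto
    ultimately show False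
      by simp
  qed
  then show "\<exists>\<delta>>0. \<forall>r. 0 < r \<and> r < \<delta> \<longrightarrow> 0 \<le> f r"
    by (intro exI[of _ "1 / Suc n"]) auto
qed

lemma sets_borel_eventually_ball_measure_le:
  fixes N L :: "'a::{metric_space, second_countable_topology} measure"
  assumes N: "finite_measure N" "sets N = sets borel" and L: "finite_measure L" "sets L = sets borel"
    and A: "A \<in> sets borel"
  shows "{x \<in> A. \<exists>\<delta>>0. \<forall>r. 0 < r \<and> r < \<delta> \<longrightarrow> b * measure L (ball x r) \<le> a * measure N (ball x r)}
    \<in> sets borel"
proof -
  note [measurable] = measurable_measure_ball[OF N] measurable_measure_ball[OF L] A
  have "((\<lambda>s. a * measure N (ball x s) - b * measure L (ball x s)) \<longlongrightarrow>
      a * measure N (ball x r) - b * measure L (ball x r)) (at_left r)" for x r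
    by (intro tendsto_intros tendsto_measure_ball_at_left N L)
  then have "{x \<in> A. \<exists>\<delta>>0. \<forall>r. 0 < r \<and> r < \<delta> \<longrightarrow> b * measure L (ball x r) \<le> a * measure N (ball x r)} =
    {x \<in> A. \<exists>n::nat. \<forall>q::rat. 0 < real_of_rat q \<and> real_of_rat q < 1 / Suc n \<longrightarrow>
       0 \<le> a * measure N (ball x (real_of_rat q)) - b * measure L (ball x (real_of_rat q))}"
    by (subst nonneg_near_zero_iff_rat[symmetric]) simp_all
  also have "\<dots> \<in> sets borel"
    by measurable
  finally show ?thesis .
qed

lemma ball_measure_less_locally_uniform:
  fixes N L :: "'a::metric_space measure"
  assumes N: "finite_measure N" "sets N = sets borel" and L: "finite_measure L" "sets L = sets borel"
    and "0 \<le> a" "0 \<le> b" "0 < r"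
    and less: "a * measure N (ball x r) < b * measure L (ball x r)"
  obtains d s where "0 < d" "0 < s"
    "\<forall>y\<in>ball x d. a * measure N (ball y s) < b * measure L (ball y s) \<and> ball y s \<subseteq> ball x r"
proof -
  interpret N: finite_measure N by fact
  interpret L: finite_measure L by fact
  have "((\<lambda>t. b * measure L (ball x t)) \<longlongrightarrow> b * measure L (ball x r)) (at_left r)"
    by (intro tendsto_mult_left tendsto_measure_ball_at_left L)
  then have "\<forall>\<^sub>F t in at_left r. a * measure N (ball x r) < b * measure L (ball x t) \<and> t \<in> {0<..<r}"
    using less \<open>0 < r\<close> by (intro eventually_conj order_tendstoD(1) eventually_at_left_real)
  then obtain t where t: "0 < t" "t < r" "a * measure N (ball x r) < b * measure L (ball x t)"
    using eventually_happens'[OF trivial_limit_at_left_real] by auto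
  \<comment> \<open>balls of radius \<open>t + d\<close> centred near \<open>x\<close> lie between \<open>ball x t\<close> and \<open>ball x r\<close>\<close>
  define d where "d = (r - t) / 2"
  have r: "r = t + 2 * d"
    by (simp add: d_def field_simps)
  show thesis
  proof (rule that[of d "t + d"])
    show "0 < d"
      using t by (simp add: d_def)
    then show "0 < t + d"
      using t by simp
    show "\<forall>y\<in>ball x d. a * measure N (ball y (t + d)) < b * measure L (ball y (t + d)) \<and>
        ball y (t + d) \<subseteq> ball x r"
    proof
      fix y assume "y \<in> ball x d"
      then have "dist x y < d"
        by simp
      have inner: "ball x t \<subseteq> ball y (t + d)"
      proof
        fix z assume "z \<in> ball x t"
        then show "z \<in> ball y (t + d)"
          using \<open>dist x y < d\<close> dist_triangle[of y z x] dist_commute[of y x] by simp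
      qed
      have outer: "ball y (t + d) \<subseteq> ball x r"
      proof
        fix z assume "z \<in> ball y (t + d)"
        then show "z \<in> ball x r"
          using \<open>dist x y < d\<close> dist_triangle[of x z y] unfolding r mem_ball by linarith
      qed
      have "a * measure N (ball y (t + d)) \<le> a * measure N (ball x r)"
        using outer N(2) \<open>0 \<le> a\<close> by (simp add: mult_left_mono N.finite_measure_mono)
      also have "\<dots> < b * measure L (ball x t)"
        by (rule t(3))
      also have "\<dots> \<le> b * measure L (ball y (t + d))"
        using inner L(2) \<open>0 \<le> b\<close> by (simp add: mult_left_mono L.finite_measure_mono)
      finally show "a * measure N (ball y (t + d)) < b * measure L (ball y (t + d)) \<and>
          ball y (t + d) \<subseteq> ball x r"
        using outer by simp
    qed
  qed
qed

lemma compact_center_separated_cover: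
  fixes K :: "'a::heine_borel set"
  assumes "compact K" and local: "\<And>x. x \<in> K \<Longrightarrow> \<exists>d>0. \<exists>s>0. \<forall>y\<in>ball x d. P y s"
  obtains C \<rho> where "C \<subseteq> K" "finite C" "center_separated C \<rho>" "K \<subseteq> (\<Union>c\<in>C. ball c (\<rho> c))"
    "\<forall>c\<in>C. P c (\<rho> c)"
proof -
  obtain d where d: "\<And>x. x \<in> K \<Longrightarrow> 0 < d x \<and> (\<exists>s>0. \<forall>y\<in>ball x (d x). P y s)"
    using bchoice[of K "\<lambda>x d. 0 < d \<and> (\<exists>s>0. \<forall>y\<in>ball x d. P y s)"] local by blast
  obtain s where s: "\<And>x. x \<in> K \<Longrightarrow> 0 < s x \<and> (\<forall>y\<in>ball x (d x). P y (s x))"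
    using bchoice[of K "\<lambda>x s. 0 < s \<and> (\<forall>y\<in>ball x (d x). P y s)"] d by blast
  have "K \<subseteq> (\<Union>x\<in>K. ball x (d x))"
    using d by force
  then obtain F where F: "F \<subseteq> K" "finite F" "K \<subseteq> (\<Union>x\<in>F. ball x (d x))"
    using compactE_image[OF assms(1), of K "\<lambda>x. ball x (d x)"] by blast
  define \<rho> where "\<rho> y = s (SOME x. x \<in> F \<and> y \<in> ball x (d x))" for y
  have \<rho>: "\<rho> y \<in> s ` F \<and> P y (\<rho> y)" if "y \<in> K" for y
  proof -
    have "\<exists>x. x \<in> F \<and> y \<in> ball x (d x)"
      using F(3) that by blast
    then have "(SOME x. x \<in> F \<and> y \<in> ball x (d x)) \<in> F \<and>
        y \<in> ball (SOME x. x \<in> F \<and> y \<in> ball x (d x)) (d (SOME x. x \<in> F \<and> y \<in> ball x (d x)))"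
      by (rule someI_ex)
    then show ?thesis
      using s F(1) unfolding \<rho>_def by blast
  qed
  have "\<forall>r\<in>s ` F. 0 < r" "\<rho> ` K \<subseteq> s ` F"
    using s F(1) \<rho> by auto
  then obtain C where "C \<subseteq> K" "finite C" "center_separated C \<rho>" "K \<subseteq> (\<Union>c\<in>C. ball c (\<rho> c))"
    using finite_radii_center_separated_cover[of "s ` F" K \<rho>] F(2) compact_imp_bounded[OF assms(1)]
    by blast
  then show thesis
    using that \<rho> by blast
qed

lemma (in finite_measure) sum_measure_le_overlap:
  assumes "finite C" "\<And>c. c \<in> C \<Longrightarrow> B c \<in> sets M" "\<And>c. c \<in> C \<Longrightarrow> B c \<subseteq> U" "U \<in> sets M"
    and overlap: "\<And>y. card {c\<in>C. y \<in> B c} \<le> k"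
  shows "(\<Sum>c\<in>C. measure M (B c)) \<le> k * measure M U"
proof -
  have integrable: "integrable M (indicator A :: 'a \<Rightarrow> real)" if "A \<in> sets M" for A
    using that by (simp add: integrable_indicator_iff Int_absorb2 sets.sets_into_space less_top[symmetric])
  have "(\<Sum>c\<in>C. measure M (B c)) = (\<Sum>c\<in>C. LINT y|M. indicator (B c) y)"
    using assms(2) by (simp add: Int_absorb2 sets.sets_into_space)
  also have "\<dots> = (LINT y|M. (\<Sum>c\<in>C. indicator (B c) y))"
    by (intro Bochner_Integration.integral_sum[symmetric] integrable assms(2))
  also have "\<dots> \<le> (LINT y|M. real k * indicator U y)"
  proof (rule integral_mono)
    show "integrable M (\<lambda>y. \<Sum>c\<in>C. indicator (B c) y :: real)"
      by (intro Bochner_Integration.integrable_sum integrable assms(2))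
    show "integrable M (\<lambda>y. real k * indicator U y)"
      by (intro integrable_mult_right integrable assms(4))
    fix y
    have "(\<Sum>c\<in>C. indicator (B c) y :: real) = card {c\<in>C. y \<in> B c}"
      using assms(1) by (simp add: indicator_def sum.If_cases Int_def)
    moreover have "y \<notin> U \<Longrightarrow> {c\<in>C. y \<in> B c} = {}"
      using assms(3) by blast
    ultimately show "(\<Sum>c\<in>C. indicator (B c) y :: real) \<le> real k * indicator U y"
      using overlap[of y] by (cases "y \<in> U") simp_all
  qed
  also have "\<dots> = k * measure M U"
    using assms(4) by (simp add: Int_absorb2 sets.sets_into_space)
  finally show ?thesis .
qed

lemma besicovitch_measure_bound:
  fixes N L :: "'a::euclidean_space measure"
  assumes N: "finite_measure N" "sets N = sets borel" and L: "finite_measure L" "sets L = sets borel"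
    and ab: "0 \<le> a" "0 \<le> b" and K: "compact K" "K \<subseteq> U" and "open U"
    and small_radii: "\<And>x \<delta>. x \<in> K \<Longrightarrow> 0 < \<delta> \<Longrightarrow>
      \<exists>r. 0 < r \<and> r < \<delta> \<and> a * measure N (ball x r) < b * measure L (ball x r)"
    and overlap: "\<And>(C::'a set) \<rho> y. center_separated C \<rho> \<Longrightarrow> card {c\<in>C. y \<in> ball c (\<rho> c)} \<le> M"
  shows "a * measure N K \<le> b * (M * measure L U)"
proof -
  interpret N: finite_measure N by fact
  interpret L: finite_measure L by fact
  have "\<exists>d>0. \<exists>s>0. \<forall>y\<in>ball x d. a * measure N (ball y s) < b * measure L (ball y s) \<and> ball y s \<subseteq> U"
    if xK: "x \<in> K" for x
  proof -
    have "x \<in> U"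
      using K(2) xK by blast
    then obtain e where "0 < e" "ball x e \<subseteq> U"
      using open_contains_ball_eq[OF \<open>open U\<close>] by blast
    obtain r where r: "0 < r" "r < e" "a * measure N (ball x r) < b * measure L (ball x r)"
      using small_radii[OF xK \<open>0 < e\<close>] by blast
    then have "ball x r \<subseteq> U"
      using \<open>ball x e \<subseteq> U\<close> subset_ball[of r e x] by simp
    obtain d s where "0 < d" "0 < s" and ds:
      "\<forall>y\<in>ball x d. a * measure N (ball y s) < b * measure L (ball y s) \<and> ball y s \<subseteq> ball x r"
      by (rule ball_measure_less_locally_uniform[OF N L ab r(1,3)])
    have "\<forall>y\<in>ball x d. a * measure N (ball y s) < b * measure L (ball y s) \<and> ball y s \<subseteq> U"
      using ds \<open>ball x r \<subseteq> U\<close> by auto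
    then show ?thesis
      using \<open>0 < d\<close> \<open>0 < s\<close> by blast
  qed
  then obtain C \<rho> where C: "C \<subseteq> K" "finite C" "center_separated C \<rho>" "K \<subseteq> (\<Union>c\<in>C. ball c (\<rho> c))"
    and good: "\<forall>c\<in>C. a * measure N (ball c (\<rho> c)) < b * measure L (ball c (\<rho> c)) \<and> ball c (\<rho> c) \<subseteq> U"
    by (rule compact_center_separated_cover[where P =
          "\<lambda>y s. a * measure N (ball y s) < b * measure L (ball y s) \<and> ball y s \<subseteq> U", OF K(1)])
  have balls: "ball c t \<in> sets N" "ball c t \<in> sets L" for c t
    using N(2) L(2) by (simp_all add: borel_open)
  have "(\<Union>c\<in>C. ball c (\<rho> c)) \<in> sets N"
    unfolding N(2) by (intro borel_open open_UN ballI open_ball)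
  then have "measure N K \<le> measure N (\<Union>c\<in>C. ball c (\<rho> c))"
    using C(4) by (rule N.finite_measure_mono[rotated])
  also have "\<dots> \<le> (\<Sum>c\<in>C. measure N (ball c (\<rho> c)))"
    using C(2) balls(1) by (intro N.finite_measure_subadditive_finite) auto
  finally have "a * measure N K \<le> (\<Sum>c\<in>C. a * measure N (ball c (\<rho> c)))"
    using ab(1) by (simp add: sum_distrib_left[symmetric] mult_left_mono)
  also have "\<dots> \<le> (\<Sum>c\<in>C. b * measure L (ball c (\<rho> c)))"
    using good by (intro sum_mono less_imp_le) auto
  also have "\<dots> = b * (\<Sum>c\<in>C. measure L (ball c (\<rho> c)))"
    by (simp add: sum_distrib_left)
  also have "\<dots> \<le> b * (M * measure L U)"
    using C(2) balls(2) good \<open>open U\<close> L(2) overlap[OF C(3)] ab(2)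
    by (intro mult_left_mono L.sum_measure_le_overlap) (auto simp: borel_open)
  finally show ?thesis .
qed

lemma measure_eq_0_if_frequently_ball_measure_less:
  fixes N L :: "'a::euclidean_space measure"
  assumes N: "finite_measure N" "sets N = sets borel" and L: "finite_measure L" "sets L = sets borel"
    and "0 < a" "0 \<le> b" and E: "E \<in> sets borel" "measure L E = 0"
    and small_radii: "\<And>x \<delta>. x \<in> E \<Longrightarrow> 0 < \<delta> \<Longrightarrow>
      \<exists>r. 0 < r \<and> r < \<delta> \<and> a * measure N (ball x r) < b * measure L (ball x r)"
  shows "measure N E = 0"
proof -
  interpret N: finite_measure N by fact
  interpret L: finite_measure L by fact
  obtain M where overlap: "\<forall>(C::'a set) \<rho> y. center_separated C \<rho> \<longrightarrow> card {c\<in>C. y \<in> ball c (\<rho> c)} \<le> M"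
    using center_separated_overlap_bound by blast
  have null_compact: "measure N K = 0" if K: "K \<subseteq> E" "compact K" for K
  proof -
    have K_borel: "K \<in> sets borel"
      using K(2) by (simp add: compact_imp_closed borel_closed)
    have "measure L K \<le> measure L E"
      using K(1) E(1) L(2) by (intro L.finite_measure_mono) auto
    then have "emeasure L K = 0"
      using E(2) measure_nonneg[of L K] by (simp add: L.emeasure_eq_measure)
    have small_K: "\<exists>r. 0 < r \<and> r < \<delta> \<and> a * measure N (ball x r) < b * measure L (ball x r)"
      if "x \<in> K" "0 < \<delta>" for x \<delta>
      using that K(1) by (intro small_radii) auto
    have "a * measure N K \<le> 0 + \<epsilon>" if "0 < \<epsilon>" for \<epsilon>
    proof -
      have "0 \<le> b * M"
        using \<open>0 \<le> b\<close> by simp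
      then have pos: "0 < b * M + 1"
        by linarith
      have "emeasure L K < ennreal (\<epsilon> / (b * M + 1))"
        using \<open>emeasure L K = 0\<close> \<open>0 < \<epsilon>\<close> pos by simp
      then have "(INF U \<in> {U. K \<subseteq> U \<and> open U}. emeasure L U) < ennreal (\<epsilon> / (b * M + 1))"
        using outer_regular[OF L(2) _ K_borel] by simp
      then obtain U where U: "K \<subseteq> U" "open U" "emeasure L U < ennreal (\<epsilon> / (b * M + 1))"
        unfolding INF_less_iff by blast
      then have "measure L U * (b * M + 1) < \<epsilon>"
        using pos by (simp add: L.emeasure_eq_measure ennreal_less_iff pos_less_divide_eq)
      have "a * measure N K \<le> b * (M * measure L U)"
        by (rule besicovitch_measure_bound[OF N L less_imp_le[OF \<open>0 < a\<close>] \<open>0 \<le> b\<close> K(2) U(1,2) small_K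
              overlap[rule_format]])
      also have "\<dots> \<le> (b * M + 1) * measure L U"
        by (simp add: algebra_simps)
      also have "\<dots> < \<epsilon>"
        using \<open>measure L U * (b * M + 1) < \<epsilon>\<close> by (simp add: mult.commute)
      finally show ?thesis
        by simp
    qed
    then have "a * measure N K \<le> 0"
      by (rule field_le_epsilon)
    then show ?thesis
      using \<open>0 < a\<close> measure_nonneg[of N K] by (simp add: mult_le_0_iff)
  qed
  have "emeasure N E = (SUP K \<in> {K. K \<subseteq> E \<and> compact K}. emeasure N K)"
    by (rule inner_regular[OF N(2) _ E(1)]) simp
  also have "\<dots> \<le> 0"
    by (rule SUP_least) (simp add: N.emeasure_eq_measure null_compact)
  finally show ?thesis
    by (simp add: N.emeasure_eq_measure)
qed

lemma eventually_ball_measure_le_full_measure: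
  fixes N L :: "'a::euclidean_space measure"
  assumes N: "finite_measure N" "sets N = sets borel" and L: "finite_measure L" "sets L = sets borel"
    and "0 < a" "0 \<le> b" and A: "A \<in> sets borel" "measure L A = 0"
  defines "S \<equiv> {x \<in> A. \<exists>\<delta>>0. \<forall>r. 0 < r \<and> r < \<delta> \<longrightarrow> b * measure L (ball x r) \<le> a * measure N (ball x r)}"
  shows "S \<in> sets borel" "measure N S = measure N A" "measure L S = 0"
proof -
  interpret N: finite_measure N by fact
  interpret L: finite_measure L by fact
  show S: "S \<in> sets borel"
    unfolding S_def by (rule sets_borel_eventually_ball_measure_le[OF N L A(1)])
  have "S \<subseteq> A"
    by (auto simp: S_def)
  then have L_le: "measure L S \<le> measure L A" "measure L (A - S) \<le> measure L A"
    using A(1) L(2) by (auto intro!: L.finite_measure_mono)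
  then show "measure L S = 0"
    using A(2) measure_nonneg[of L S] by linarith
  have "measure L (A - S) = 0"
    using A(2) L_le(2) measure_nonneg[of L "A - S"] by linarith
  then have "measure N (A - S) = 0"
    using A(1) S \<open>0 < a\<close> \<open>0 \<le> b\<close>
    by (intro measure_eq_0_if_frequently_ball_measure_less[OF N L]) (auto simp: S_def not_le)
  then show "measure N S = measure N A"
    using N.finite_measure_Diff[of A S] A(1) S \<open>S \<subseteq> A\<close> N(2) by simp
qed

theorem lemma3:
  fixes \<mu> :: "'a::euclidean_space set \<Rightarrow> real" and Ap :: "'a set"
  assumes "signed_measure borel \<mu>"
    and "hahn_decomposition borel \<mu> Ap"
  shows "\<mu> {x \<in> Ap. \<exists>\<delta>>0. \<forall>r. 0 < r \<and> r < \<delta> \<longrightarrow>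
            pos_part \<mu> Ap (ball x r) \<le> 10 * \<mu> (ball x r)} = \<mu> Ap"
proof -
  obtain N L where N: "finite_measure N" "sets N = sets borel"
    and L: "finite_measure L" "sets L = sets borel"
    and N_eq: "\<And>E. E \<in> sets borel \<Longrightarrow> measure N E = \<mu> (E \<inter> Ap)"
    and \<mu>_eq: "\<And>E. E \<in> sets borel \<Longrightarrow> \<mu> E = measure N E - measure L E"
    by (rule hahn_decomposition_jordan[OF assms]) (rule that)
  have Ap: "Ap \<in> sets borel"
    using assms(2) by (simp add: hahn_decomposition_def)
  have "measure L Ap = 0"
    using \<mu>_eq[OF Ap] N_eq[OF Ap] by simp
  have "pos_part \<mu> Ap (ball x r) \<le> 10 * \<mu> (ball x r) \<longleftrightarrow>
      10 * measure L (ball x r) \<le> 9 * measure N (ball x r)" for x r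
    using N_eq[of "ball x r"] \<mu>_eq[of "ball x r"] by (simp add: pos_part_def borel_open)
  then show ?thesis
    using eventually_ball_measure_le_full_measure[OF N L _ _ Ap \<open>measure L Ap = 0\<close>, where a = 9 and b = 10]
      \<mu>_eq Ap \<open>measure L Ap = 0\<close> by simp
qed

end
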